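(* Let $k\in[-\pi,\pi)$ and let $w\in\ell^2(\mathbb Z;\mathbb C^6)$ satisfy $\hat H_{\mathrm{II}}(k)w=Ew$ for some real constant $E$. Then $$\hat H_{\mathrm{II}}(k)\hat R(k)w=\hat R(k)\hat H_{\mathrm{II}}(k)w=E\,\hat R(k)w,\qquad \hat R(k)\hat R(k)w=w,\qquad \hat H_{\mathrm{II}}(k)\hat Vw=-E\,\hat Vw.$$
   Context: Parameters $b_\pm>0$, $\delta_\pm$ with $b_\pm+\delta_\pm>0$, $c>0$. For $n\in\mathbb Z$ let $b_n=b_+$ ($n\ge0$), $b_n=b_-$ ($n\le-1$); $c_n=b_++\delta_+$ ($n\ge0$), $c_{-1}=c$, $c_n=b_-+\delta_-$ ($n\le-2$); $d_n=b_++\delta_+$ ($n\ge0$), $d_{-1}=d_{-2}=c$, $d_n=b_-+\delta_-$ ($n\le-3$). $\hat H_{\mathrm{II}}(k)$ acts on $w=\{w(n)\}_{n\in\mathbb Z}$, $w(n)=(w_{j,n})_{j=1}^6$, by $(\hat H_{\mathrm{II}}(k)w)_{1,n}=-b_nw_{4,n}-b_nw_{5,n}-c_ne^{-ik}w_{6,n+1}$, $(\hat H_{\mathrm{II}}(k)w)_{2,n}=-b_nw_{4,n}-d_{n-2}e^{ik}w_{5,n-2}-b_nw_{6,n}$, $(\hat H_{\mathrm{II}}(k)w)_{3,n}=-c_nw_{4,n+1}-b_nw_{5,n}-b_nw_{6,n}$, $(\hat H_{\mathrm{II}}(k)w)_{4,n}=-b_nw_{1,n}-b_nw_{2,n}-c_{n-1}w_{3,n-1}$,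 $(\hat H_{\mathrm{II}}(k)w)_{5,n}=-b_nw_{1,n}-d_ne^{-ik}w_{2,n+2}-b_nw_{3,n}$, $(\hat H_{\mathrm{II}}(k)w)_{6,n}=-c_{n-1}e^{ik}w_{1,n-1}-b_nw_{2,n}-b_nw_{3,n}$. Operators: $[\hat R(k)w](n)=e^{ink}\begin{pmatrix}J&0\\0&J\end{pmatrix}\overline{w(n)}$ with $J=\begin{pmatrix}0&0&1\\0&1&0\\1&0&0\end{pmatrix}$, and $(\hat Vw)(n)=\begin{pmatrix}I_3&0\\0&-I_3\end{pmatrix}w(n)$. *)

theory Defs
  imports "HOL-Analysis.Analysis"
begin

definition vec6 :: "complex \<Rightarrow> complex \<Rightarrow> complex \<Rightarrow> complex \<Rightarrow> complex \<Rightarrow> complex \<Rightarrow> complex ^ 6" where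
  "vec6 a1 a2 a3 a4 a5 a6 = (\<chi> i. if i = 1 then a1 else if i = 2 then a2 else if i = 3 then a3
      else if i = 4 then a4 else if i = 5 then a5 else a6)"

definition bseq :: "real \<Rightarrow> real \<Rightarrow> int \<Rightarrow> real" where
  "bseq bp bm n = (if n \<ge> 0 then bp else bm)"

definition cseq :: "real \<Rightarrow> real \<Rightarrow> real \<Rightarrow> real \<Rightarrow> real \<Rightarrow> int \<Rightarrow> real" where
  "cseq bp bm dp dm c n = (if n \<ge> 0 then bp + dp else if n = -1 then c else bm + dm)"

definition dseq :: "real \<Rightarrow> real \<Rightarrow> real \<Rightarrow> real \<Rightarrow> real \<Rightarrow> int \<Rightarrow> real" where
  "dseq bp bm dp dm c n = (if n \<ge> 0 then bp + dp else if n = -1 \<or> n = -2 then c else bm + dm)"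

definition H_II :: "real \<Rightarrow> real \<Rightarrow> real \<Rightarrow> real \<Rightarrow> real \<Rightarrow> real \<Rightarrow> (int \<Rightarrow> complex ^ 6) \<Rightarrow> (int \<Rightarrow> complex ^ 6)" where
  "H_II bp bm dp dm c k w = (\<lambda>n.
     let b = (\<lambda>m. complex_of_real (bseq bp bm m));
         cc = (\<lambda>m. complex_of_real (cseq bp bm dp dm c m));
         d = (\<lambda>m. complex_of_real (dseq bp bm dp dm c m));
         e = exp (\<i> * complex_of_real k);
         em = exp (- \<i> * complex_of_real k)
     in vec6
       (- b n * w n $ 4 - b n * w n $ 5 - cc n * em * w (n+1) $ 6)
       (- b n * w n $ 4 - d (n-2) * e * w (n-2) $ 5 - b n * w n $ 6)
       (- cc n * w (n+1) $ 4 - b n * w n $ 5 - b n * w n $ 6)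
       (- b n * w n $ 1 - b n * w n $ 2 - cc (n-1) * w (n-1) $ 3)
       (- b n * w n $ 1 - d n * em * w (n+2) $ 2 - b n * w n $ 3)
       (- cc (n-1) * e * w (n-1) $ 1 - b n * w n $ 2 - b n * w n $ 3))"

definition R_op :: "real \<Rightarrow> (int \<Rightarrow> complex ^ 6) \<Rightarrow> (int \<Rightarrow> complex ^ 6)" where
  "R_op k w = (\<lambda>n. exp (\<i> * of_int n * complex_of_real k) *s
     vec6 (cnj (w n $ 3)) (cnj (w n $ 2)) (cnj (w n $ 1))
          (cnj (w n $ 6)) (cnj (w n $ 5)) (cnj (w n $ 4)))"

definition V_op :: "(int \<Rightarrow> complex ^ 6) \<Rightarrow> (int \<Rightarrow> complex ^ 6)" where
  "V_op w = (\<lambda>n. vec6 (w n $ 1) (w n $ 2) (w n $ 3) (- w n $ 4) (- w n $ 5) (- w n $ 6))"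

definition l2 :: "(int \<Rightarrow> complex ^ 6) \<Rightarrow> bool" where
  "l2 w \<longleftrightarrow> (\<lambda>n. (norm (w n))\<^sup>2) summable_on UNIV"

end

theory Submission
  imports Defs
begin

text \<open>All identities are algebraic; positivity of the coefficients, the range of \<open>k\<close>
  and square-summability of \<open>w\<close> play no role. Writing the phase \<open>exp (i n k)\<close> as
  \<open>cis (n k)\<close>, conjugation turns the hopping factors \<open>exp (\<plusminus>i k)\<close> into
  \<open>exp (\<mp>i k)\<close>, and the shifts of the phase at the sites \<open>n \<plusminus> 1\<close>,
  \<open>n \<plusminus> 2\<close> supply exactly the compensating factors; as \<open>H\<^sub>I\<^sub>I(k)\<close> is
  also symmetric under the exchange of components 1, 3 and 4, 6 performed by \<open>J\<close>, it commutes
  with \<open>R(k)\<close>. Real coefficients and real \<open>E\<close> make \<open>R(k)\<close> preserve the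
  \<open>E\<close>-eigenspace. Finally \<open>H\<^sub>I\<^sub>I(k)\<close> only couples components 1, 2, 3
  with 4, 5, 6, so it anticommutes with \<open>V\<close>.\<close>

lemma exhaust_6:
  fixes x :: 6
  shows "x = 1 \<or> x = 2 \<or> x = 3 \<or> x = 4 \<or> x = 5 \<or> x = 6"
proof (induct x)
  case (of_int z)
  then have "z = 0 \<or> z = 1 \<or> z = 2 \<or> z = 3 \<or> z = 4 \<or> z = 5" by fastforce
  then show ?case by auto
qed

lemma forall_6: "(\<forall>i::6. P i) \<longleftrightarrow> P 1 \<and> P 2 \<and> P 3 \<and> P 4 \<and> P 5 \<and> P 6"
  by (metis exhaust_6)

lemma vec_eq_6_iff:
  fixes u v :: "'a ^ 6"
  shows "v = u \<longleftrightarrow> v$1 = u$1 \<and> v$2 = u$2 \<and> v$3 = u$3 \<and> v$4 = u$4 \<and> v$5 = u$5 \<and> v$6 = u$6"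
  by (simp only: vec_eq_iff forall_6)

lemma vec6_nth [simp]:
  "vec6 a1 a2 a3 a4 a5 a6 $ 1 = a1" "vec6 a1 a2 a3 a4 a5 a6 $ 2 = a2"
  "vec6 a1 a2 a3 a4 a5 a6 $ 3 = a3" "vec6 a1 a2 a3 a4 a5 a6 $ 4 = a4"
  "vec6 a1 a2 a3 a4 a5 a6 $ 5 = a5" "vec6 a1 a2 a3 a4 a5 a6 $ 6 = a6"
  by (simp_all add: vec6_def)

lemma exp_int_phase_eq_cis: "exp (\<i> * of_int n * complex_of_real k) = cis (of_int n * k)"
  by (simp add: cis_conv_exp mult_ac)

lemma exp_phase_eq_cis:
  "exp (\<i> * complex_of_real k) = cis k"
  "exp (- \<i> * complex_of_real k) = cis (- k)"
  by (simp_all add: cis_conv_exp)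

lemma H_II_R_op: "H_II bp bm dp dm c k (R_op k w) = R_op k (H_II bp bm dp dm c k w)"
  unfolding H_II_def R_op_def Let_def exp_int_phase_eq_cis exp_phase_eq_cis fun_eq_iff vec_eq_6_iff
  by (simp add: cis_cnj cis_mult algebra_simps)

lemma R_op_R_op: "R_op k (R_op k w) = w"
  unfolding R_op_def exp_int_phase_eq_cis fun_eq_iff vec_eq_6_iff
  by (simp add: cis_cnj cis_mult mult.assoc[symmetric])

lemma R_op_scale_real: "R_op k (\<lambda>n. complex_of_real a *s w n) = (\<lambda>n. complex_of_real a *s R_op k w n)"
  unfolding R_op_def fun_eq_iff vec_eq_6_iff
  by (simp add: mult_ac)

lemma V_op_scale: "V_op (\<lambda>n. a *s w n) = (\<lambda>n. a *s V_op w n)"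
  unfolding V_op_def fun_eq_iff vec_eq_6_iff
  by simp

lemma H_II_V_op: "H_II bp bm dp dm c k (V_op w) = (\<lambda>n. - V_op (H_II bp bm dp dm c k w) n)"
  unfolding H_II_def V_op_def Let_def fun_eq_iff vec_eq_6_iff
  by (simp add: algebra_simps)

theorem proposition11:
  fixes bp bm dp dm c k E :: real and w :: "int \<Rightarrow> complex ^ 6"
  assumes "bp > 0" "bm > 0" "bp + dp > 0" "bm + dm > 0" "c > 0"
    and "k \<in> {-pi..<pi}"
    and "l2 w"
    and "H_II bp bm dp dm c k w = (\<lambda>n. complex_of_real E *s w n)"
  shows "H_II bp bm dp dm c k (R_op k w) = R_op k (H_II bp bm dp dm c k w)
     \<and> R_op k (H_II bp bm dp dm c k w) = (\<lambda>n. complex_of_real E *s R_op k w n)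
     \<and> R_op k (R_op k w) = w
     \<and> H_II bp bm dp dm c k (V_op w) = (\<lambda>n. complex_of_real (- E) *s V_op w n)"
proof -
  note eigen = \<open>H_II bp bm dp dm c k w = (\<lambda>n. complex_of_real E *s w n)\<close>
  have "R_op k (H_II bp bm dp dm c k w) = (\<lambda>n. complex_of_real E *s R_op k w n)"
    unfolding eigen by (rule R_op_scale_real)
  moreover have "H_II bp bm dp dm c k (V_op w) = (\<lambda>n. complex_of_real (- E) *s V_op w n)"
    unfolding H_II_V_op eigen V_op_scale by simp
  ultimately show ?thesis
    using H_II_R_op R_op_R_op by blast
qed

end
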